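(* Let $\mathbf{AUS}_3$ be the set of density matrices $\sigma$ on $\mathbb{C}^2\otimes\mathbb{C}^2$ such that for every unitary $U$ on $\mathbb{C}^2\otimes\mathbb{C}^2$, every choice of unit vectors $\hat u_1,\hat u_2,\hat u_3\in\mathbb{R}^3$ and every choice of orthonormal vectors $\hat v_1,\hat v_2,\hat v_3\in\mathbb{R}^3$, $$\frac{1}{\sqrt3}\Big|\sum_{i=1}^3\mathrm{Tr}\big(U\sigma U^\dagger\,(\hat u_i\cdot\vec s)\otimes(\hat v_i\cdot\vec s)\big)\Big|\le 1.$$ Then a two-qubit state $\sigma$ belongs to $\mathbf{AUS}_3$ if and only if its purity satisfies $\mathrm{Tr}(\sigma^2)\le 1/2$; equivalently, iff $\|\sigma-I/4\|_F\le 1/2$, where $\|\cdot\|_F$ is the Frobenius norm.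
   Context: $\vec{s}=(s_1,s_2,s_3)$ denotes the vector of Pauli matrices, and for $\hat w\in\mathbb{R}^3$, $\hat w\cdot\vec s=\sum_k w_k s_k$. The purity of $\sigma$ is $\mathrm{Tr}(\sigma^2)$. *)

theory Defs
  imports "HOL-Analysis.Analysis"
begin

text \<open>Two-qubit space C^2 (x) C^2 is indexed by the product type 2 \<times> 2.
  Basis index 0 / 1 of the type 2 corresponds to |0> / |1>.\<close>

type_synonym qmat = "complex ^ 2 ^ 2"
type_synonym qqmat = "complex ^ (2 \<times> 2) ^ (2 \<times> 2)"

definition mtrace :: "complex ^ 'n ^ 'n \<Rightarrow> complex" where
  "mtrace A = (\<Sum>i\<in>UNIV. A $ i $ i)"

definition adj :: "complex ^ 'n ^ 'm \<Rightarrow> complex ^ 'm ^ 'n" where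
  "adj A = (\<chi> i j. cnj (A $ j $ i))"

definition hermitian :: "complex ^ 'n ^ 'n \<Rightarrow> bool" where
  "hermitian A \<longleftrightarrow> adj A = A"

definition psd :: "complex ^ 'n ^ 'n \<Rightarrow> bool" where
  "psd A \<longleftrightarrow> hermitian A \<and>
     (\<forall>v :: complex ^ 'n. 0 \<le> Re (\<Sum>i\<in>UNIV. \<Sum>j\<in>UNIV. cnj (v $ i) * A $ i $ j * v $ j))"

definition density_matrix :: "complex ^ 'n ^ 'n \<Rightarrow> bool" where
  "density_matrix A \<longleftrightarrow> psd A \<and> mtrace A = 1"

definition unitary :: "complex ^ 'n ^ 'n \<Rightarrow> bool" where
  "unitary U \<longleftrightarrow> U ** adj U = mat 1 \<and> adj U ** U = mat 1"

definition kron :: "qmat \<Rightarrow> qmat \<Rightarrow> qqmat" where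
  "kron A B = (\<chi> p q. A $ fst p $ fst q * B $ snd p $ snd q)"

definition pauli_x :: qmat where
  "pauli_x = (\<chi> i j. if i = j then 0 else 1)"
definition pauli_y :: qmat where
  "pauli_y = (\<chi> i j. if i = j then 0 else if i = 0 then - \<i> else \<i>)"
definition pauli_z :: qmat where
  "pauli_z = (\<chi> i j. if i \<noteq> j then 0 else if i = 0 then 1 else -1)"

definition pauli :: "3 \<Rightarrow> qmat" where
  "pauli k = (if k = 0 then pauli_x else if k = 1 then pauli_y else pauli_z)"

definition dot_pauli :: "real ^ 3 \<Rightarrow> qmat" where
  "dot_pauli w = (\<Sum>k\<in>UNIV. (\<chi> a b. complex_of_real (w $ k) * pauli k $ a $ b))"

definition frob_norm :: "complex ^ 'n ^ 'm \<Rightarrow> real" where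
  "frob_norm A = sqrt (\<Sum>i\<in>UNIV. \<Sum>j\<in>UNIV. (cmod (A $ i $ j))\<^sup>2)"

definition AUS3 :: "qqmat set" where
  "AUS3 = {\<sigma>. density_matrix \<sigma> \<and>
     (\<forall>U u v. unitary U \<longrightarrow>
        (\<forall>i\<in>{1,2,3::nat}. norm (u i) = 1) \<longrightarrow>
        (\<forall>i\<in>{1,2,3::nat}. \<forall>j\<in>{1,2,3::nat}. v i \<bullet> v j = (if i = j then 1 else 0)) \<longrightarrow>
        1 / sqrt 3 * cmod (\<Sum>i\<in>{1,2,3::nat}.
            mtrace (U ** \<sigma> ** adj U ** kron (dot_pauli (u i)) (dot_pauli (v i)))) \<le> 1)}"

end

theory Submission
  imports Defs
begin

text \<open>
  The functional in the definition of AUS3 is Tr (U \<sigma> U* M) with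
  M = \<Sum>_i (u_i \<cdot> s) \<otimes> (v_i \<cdot> s).  This M is traceless, and because the Pauli matrices
  are Hilbert-Schmidt orthogonal of norm \<surd>2 and the v_i are orthonormal, |M|_F = 2\<surd>3.
  Cauchy-Schwarz against U \<sigma> U* - I/4 therefore bounds the functional by 2\<surd>3 |\<sigma> - I/4|_F,
  and |\<sigma> - I/4|_F^2 = Tr \<sigma>^2 - 1/4.

  Conversely, let U map an eigenbasis of \<sigma> onto the Bell basis.  For the Bell-diagonal
  state U \<sigma> U* the functional is \<Sum>_i u_i \<cdot> T v_i with T = diag t and |t|^2 = 4 Tr \<sigma>^2 - 1.
  Taking u_i = T v_i / |T v_i| gives \<Sum>_i |T v_i|, which equals \<surd>3 |t| once the orthonormal
  frame v is chosen with all |T v_i| equal.  Hence purity above 1/2 violates the bound.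
\<close>

lemma sum_UNIV_2: "sum f (UNIV :: 2 set) = f 0 + f 1"
proof -
  have two: "(2::2) = 0" by simp
  show ?thesis unfolding sum_2 two by (simp add: add.commute)
qed

lemma sum_UNIV_3: "sum f (UNIV :: 3 set) = f 0 + f 1 + f 2"
proof -
  have three: "(3::3) = 0" by simp
  show ?thesis unfolding sum_3 three by (simp add: ac_simps)
qed

lemma sum_UNIV_prod: "(\<Sum>p\<in>UNIV. f p) = (\<Sum>a\<in>UNIV. \<Sum>b\<in>UNIV. f (a, b))"
  by (simp add: UNIV_Times_UNIV[symmetric] sum.cartesian_product del: UNIV_Times_UNIV)

lemma UNIV_2_cases: "x = (0::2) \<or> x = 1"
  using exhaust_2[of x] by auto

lemma sum_UNIV_2_times_2: "(\<Sum>p\<in>UNIV. f p) = f (0,0) + f (0,1) + f (1,0) + f ((1,1) :: 2 \<times> 2)"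
  by (simp add: sum_UNIV_prod sum_UNIV_2 add.assoc)

lemma obtain_other_two_of_3:
  fixes a :: 3
  obtains b c where "a \<noteq> b" "a \<noteq> c" "b \<noteq> c" "UNIV = {a, b, c}"
proof -
  have "card (UNIV - {a}) = 2" by (simp add: card_Diff_singleton)
  then obtain b c where "UNIV - {a} = {b, c}" "b \<noteq> c" by (meson card_2_iff)
  then show ?thesis by (intro that[of b c]) auto
qed

lemma adj_nth [simp]: "adj A $ i $ j = cnj (A $ j $ i)"
  by (simp add: adj_def)

lemma adj_adj [simp]: "adj (adj A) = A"
  by (simp add: vec_eq_iff)

lemma adj_mult: "adj (A ** B) = adj B ** adj A"
  by (simp add: vec_eq_iff matrix_matrix_mult_def mult.commute)

lemma hermitian_unitary_conj: "hermitian A \<Longrightarrow> hermitian (U ** A ** adj U)"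
  by (simp add: hermitian_def adj_mult matrix_mul_assoc)

lemma hermitian_if_density_matrix: "density_matrix \<sigma> \<Longrightarrow> hermitian \<sigma>"
  by (simp add: density_matrix_def psd_def)

lemma mtrace_mult_commute: "mtrace ((A :: complex^'n^'m) ** B) = mtrace (B ** A)"
  unfolding mtrace_def matrix_matrix_mult_def
  by (simp, subst sum.swap, simp add: mult.commute)

lemma mtrace_sum: "mtrace (sum f S) = (\<Sum>x\<in>S. mtrace (f x))"
  unfolding mtrace_def by (simp add: sum_component, subst sum.swap, rule refl)

lemma mtrace_mat_1: "mtrace (mat 1 :: complex^'n^'n) = of_nat CARD('n)"
  by (simp add: mtrace_def mat_def)

lemma matrix_mul_sum_right: "(A :: 'a::semiring_1^'n^'m) ** sum f S = (\<Sum>x\<in>S. A ** f x)"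
  by (induct S rule: infinite_finite_induct) (simp_all add: matrix_add_ldistrib)

lemma matrix_mul_diff_left: "(A :: 'a::ring_1^'n^'m) ** (B - C) = A ** B - A ** C"
  by (simp add: vec_eq_iff matrix_matrix_mult_def algebra_simps sum_subtractf)

lemma matrix_mul_diff_right: "((B - C) :: 'a::ring_1^'n^'m) ** A = B ** A - C ** A"
  by (simp add: vec_eq_iff matrix_matrix_mult_def algebra_simps sum_subtractf)

definition diag_mat :: "('n \<Rightarrow> real) \<Rightarrow> complex^'n^'n" where
  "diag_mat p = (\<chi> i j. if i = j then complex_of_real (p i) else 0)"

lemma mtrace_diag_mat_mult: "mtrace (diag_mat p ** A) = (\<Sum>j\<in>UNIV. complex_of_real (p j) * A $ j $ j)"
  unfolding mtrace_def matrix_matrix_mult_def diag_mat_def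
  by (simp add: if_distrib if_distribR sum.delta cong del: if_weak_cong)

lemma unitary_iff_mult_adj: "unitary (U :: complex^'n^'n) \<longleftrightarrow> U ** adj U = mat 1"
  unfolding unitary_def using matrix_left_right_inverse1 by blast

lemma adj_mat_1 [simp]: "adj (mat 1 :: complex^'n^'n) = mat 1"
  by (simp add: vec_eq_iff mat_def)

lemma unitary_mat_1: "unitary (mat 1 :: complex^'n^'n)"
  by (simp add: unitary_def)

lemma unitary_mult: "unitary A \<Longrightarrow> unitary B \<Longrightarrow> unitary (A ** (B :: complex^'n^'n))"
  unfolding unitary_iff_mult_adj
  by (simp add: adj_mult matrix_mul_assoc flip: matrix_mul_assoc[of A])

lemma unitary_conj_scaleR_mat_1:
  "unitary U \<Longrightarrow> U ** (c *\<^sub>R mat 1) ** adj U = (c *\<^sub>R mat 1 :: complex^'n^'n)"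
proof -
  assume "unitary U"
  have "U ** (c *\<^sub>R mat 1) ** adj U = c *\<^sub>R (U ** adj U)"
    by (simp add: matrix_scalar_ac scalar_matrix_assoc)
  with \<open>unitary U\<close> show ?thesis by (simp add: unitary_def)
qed

lemma mtrace_unitary_conj: "unitary U \<Longrightarrow> mtrace (U ** A ** adj U) = mtrace A"
  by (metis (no_types) matrix_mul_assoc matrix_mul_rid mtrace_mult_commute unitary_def)

definition hs_inner :: "complex^'n^'m \<Rightarrow> complex^'n^'m \<Rightarrow> complex" where
  "hs_inner A B = (\<Sum>i\<in>UNIV. \<Sum>j\<in>UNIV. A $ i $ j * cnj (B $ i $ j))"

lemma mtrace_mult_adj: "mtrace (A ** adj B) = hs_inner A B"
  by (simp add: mtrace_def hs_inner_def matrix_matrix_mult_def)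

lemma power2_norm_matrix: "(norm (A :: complex^'n^'m))\<^sup>2 = (\<Sum>i\<in>UNIV. \<Sum>j\<in>UNIV. (cmod (A $ i $ j))\<^sup>2)"
  by (simp add: norm_vec_def L2_set_def sum_nonneg)

lemma norm_eq_frob_norm: "norm (A :: complex^'n^'m) = frob_norm A"
  by (simp add: frob_norm_def flip: power2_norm_matrix)

lemma hs_inner_self: "hs_inner A A = complex_of_real ((norm A)\<^sup>2)"
  unfolding hs_inner_def power2_norm_matrix of_real_sum complex_norm_square ..

lemma cmod_sum_mult_cnj_le: "cmod (\<Sum>j\<in>UNIV. (x :: complex^'n) $ j * cnj (y $ j)) \<le> norm x * norm y"
proof -
  have "cmod (\<Sum>j\<in>UNIV. x $ j * cnj (y $ j)) \<le> (\<Sum>j\<in>UNIV. \<bar>cmod (x $ j)\<bar> * \<bar>cmod (y $ j)\<bar>)"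
    by (rule order.trans[OF norm_sum]) (simp add: norm_mult)
  also have "\<dots> \<le> norm x * norm y"
    unfolding norm_vec_def by (rule L2_set_mult_ineq)
  finally show ?thesis .
qed

lemma hs_inner_Cauchy_Schwarz: "cmod (hs_inner A B) \<le> norm A * norm B"
proof -
  have "cmod (hs_inner A B) \<le> (\<Sum>i\<in>UNIV. \<bar>norm (A $ i)\<bar> * \<bar>norm (B $ i)\<bar>)"
    unfolding hs_inner_def by (rule order.trans[OF norm_sum]) (simp add: sum_mono cmod_sum_mult_cnj_le)
  also have "\<dots> \<le> norm A * norm B"
    unfolding norm_vec_def[of A] norm_vec_def[of B] by (rule L2_set_mult_ineq)
  finally show ?thesis .
qed

lemma norm_adj: "norm (adj A) = norm A"
  unfolding norm_eq_frob_norm frob_norm_def by (simp, subst sum.swap, rule refl)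

lemma norm_unitary_conj: "unitary U \<Longrightarrow> norm (U ** A ** adj U) = norm A"
proof -
  assume "unitary U"
  then have "adj U ** U = mat 1" by (simp add: unitary_def)
  have "(U ** A ** adj U) ** adj (U ** A ** adj U) = U ** A ** (adj U ** U) ** adj A ** adj U"
    by (simp add: adj_mult matrix_mul_assoc)
  also have "\<dots> = U ** (A ** adj A) ** adj U"
    by (simp add: \<open>adj U ** U = mat 1\<close> matrix_mul_assoc)
  finally have "(U ** A ** adj U) ** adj (U ** A ** adj U) = U ** (A ** adj A) ** adj U" .
  then have "hs_inner (U ** A ** adj U) (U ** A ** adj U) = hs_inner A A"
    using \<open>unitary U\<close> by (simp add: mtrace_unitary_conj flip: mtrace_mult_adj)
  then show ?thesis
    unfolding hs_inner_self of_real_eq_iff by (simp add: power2_eq_iff_nonneg)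
qed

lemma compact_unitary: "compact {U :: complex^'n^'n. unitary U}"
proof (rule compact_eq_bounded_closed[THEN iffD2], rule conjI)
  have "norm U = sqrt CARD('n)" if "unitary U" for U :: "complex^'n^'n"
  proof -
    have "hs_inner U U = of_nat CARD('n)"
      using that by (simp add: unitary_def mtrace_mat_1 flip: mtrace_mult_adj)
    then have "(norm U)\<^sup>2 = CARD('n)"
      unfolding hs_inner_self by (metis of_real_eq_iff of_real_of_nat_eq)
    then show ?thesis by (simp add: real_sqrt_unique)
  qed
  then show "bounded {U :: complex^'n^'n. unitary U}"
    unfolding bounded_iff by (metis mem_Collect_eq order_refl)
  have "continuous_on UNIV (\<lambda>U :: complex^'n^'n. U ** adj U)"
       "continuous_on UNIV (\<lambda>U :: complex^'n^'n. adj U ** U)"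
    unfolding matrix_matrix_mult_def adj_def by (intro continuous_intros)+
  then show "closed {U :: complex^'n^'n. unitary U}"
    unfolding unitary_def Collect_conj_eq
    by (intro closed_Int closed_Collect_eq continuous_on_const) auto
qed

lemma purity_eq_power2_norm: "hermitian A \<Longrightarrow> Re (mtrace (A ** A)) = (norm A)\<^sup>2"
  unfolding hermitian_def by (metis Re_complex_of_real hs_inner_self mtrace_mult_adj)

lemma inner_mat_1: "A \<bullet> (mat 1 :: complex^'n^'n) = Re (mtrace A)"
  unfolding inner_vec_def mtrace_def mat_def
  by (simp add: inner_complex_def if_distrib if_distribR sum.delta Re_sum cong del: if_weak_cong)

lemma power2_norm_mat_1: "(norm (mat 1 :: complex^'n^'n))\<^sup>2 = CARD('n)"
  unfolding power2_norm_matrix mat_def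
  by (simp add: if_distrib if_distribR sum.delta cong del: if_weak_cong)

lemma power2_norm_minus_scaleR_mat_1:
  "(norm (A - c *\<^sub>R mat 1 :: complex^'n^'n))\<^sup>2 = (norm A)\<^sup>2 - 2 * c * Re (mtrace A) + c\<^sup>2 * CARD('n)"
  using dot_norm_neg[of A "c *\<^sub>R mat 1"]
  by (simp add: inner_mat_1 power_mult_distrib power2_norm_mat_1)

lemma mtrace_mult_traceless_le:
  fixes A M :: "complex^'n^'n"
  assumes "mtrace M = 0"
  shows "cmod (mtrace (A ** M)) \<le> norm (A - c *\<^sub>R mat 1) * norm M"
proof -
  have "mtrace ((c *\<^sub>R mat 1) ** M) = 0"
    using assms by (simp add: mtrace_def scaleR_sum_right[symmetric] flip: scalar_matrix_assoc)
  then have "mtrace (A ** M) = mtrace ((A - c *\<^sub>R mat 1) ** adj (adj M))"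
    by (simp add: matrix_mul_diff_right mtrace_def sum_subtractf)
  also have "\<dots> = hs_inner (A - c *\<^sub>R mat 1) (adj M)"
    by (rule mtrace_mult_adj)
  finally show ?thesis
    using hs_inner_Cauchy_Schwarz by (metis norm_adj)
qed

section \<open>Pauli correlations\<close>

lemma dot_pauli_nth: "dot_pauli w $ i $ j =
   (if i = j then (if i = 0 then complex_of_real (w $ 2) else - complex_of_real (w $ 2))
    else if i = 0 then complex_of_real (w $ 0) - \<i> * complex_of_real (w $ 1)
    else complex_of_real (w $ 0) + \<i> * complex_of_real (w $ 1))"
proof -
  have "dot_pauli w $ i $ j = (\<Sum>k\<in>UNIV. complex_of_real (w $ k) * pauli k $ i $ j)"
    unfolding dot_pauli_def by (simp add: sum_component)
  then show ?thesis
    unfolding sum_UNIV_3 pauli_def pauli_x_def pauli_y_def pauli_z_def by simp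
qed

lemma mtrace_dot_pauli: "mtrace (dot_pauli w) = 0"
  by (simp add: mtrace_def sum_UNIV_2 dot_pauli_nth)

lemma hs_inner_dot_pauli: "hs_inner (dot_pauli a) (dot_pauli b) = complex_of_real (2 * (a \<bullet> b))"
  unfolding hs_inner_def inner_vec_def
  by (simp add: sum_UNIV_2 sum_UNIV_3 dot_pauli_nth algebra_simps complex_eq_iff)

lemma mtrace_kron: "mtrace (kron A B) = mtrace A * mtrace B"
  unfolding mtrace_def kron_def by (simp add: sum_UNIV_prod sum_product)

lemma hs_inner_kron: "hs_inner (kron A B) (kron C D) = hs_inner A C * hs_inner B D"
  unfolding hs_inner_def kron_def by (simp add: sum_UNIV_prod sum_UNIV_2 algebra_simps)

lemma hs_inner_sum_left: "hs_inner (sum f S) B = (\<Sum>x\<in>S. hs_inner (f x) B)"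
  unfolding hs_inner_def
  by (simp add: sum_component sum_distrib_right, subst sum.swap, subst (2) sum.swap, rule refl)

lemma hs_inner_sum_right: "hs_inner A (sum f S) = (\<Sum>x\<in>S. hs_inner A (f x))"
  unfolding hs_inner_def
  by (simp add: sum_component sum_distrib_left, subst sum.swap, subst (2) sum.swap, rule refl)

definition unit_triple :: "(nat \<Rightarrow> real^3) \<Rightarrow> bool" where
  "unit_triple u \<longleftrightarrow> (\<forall>i\<in>{1,2,3}. norm (u i) = 1)"

definition orthonormal_triple :: "(nat \<Rightarrow> real^3) \<Rightarrow> bool" where
  "orthonormal_triple v \<longleftrightarrow> (\<forall>i\<in>{1,2,3}. \<forall>j\<in>{1,2,3}. v i \<bullet> v j = (if i = j then 1 else 0))"

definition correlation_sum :: "qqmat \<Rightarrow> (nat \<Rightarrow> real^3) \<Rightarrow> (nat \<Rightarrow> real^3) \<Rightarrow> complex" where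
  "correlation_sum \<rho> u v = (\<Sum>i\<in>{1,2,3}. mtrace (\<rho> ** kron (dot_pauli (u i)) (dot_pauli (v i))))"

lemma mem_AUS3_iff: "\<sigma> \<in> AUS3 \<longleftrightarrow> density_matrix \<sigma> \<and>
  (\<forall>U u v. unitary U \<longrightarrow> unit_triple u \<longrightarrow> orthonormal_triple v \<longrightarrow>
     cmod (correlation_sum (U ** \<sigma> ** adj U) u v) \<le> sqrt 3)"
  by (simp add: AUS3_def unit_triple_def orthonormal_triple_def correlation_sum_def field_simps)

lemma norm_pauli_frame_sum:
  assumes "unit_triple u" "orthonormal_triple v"
  shows "norm (\<Sum>i\<in>{1,2,3}. kron (dot_pauli (u i)) (dot_pauli (v i))) = 2 * sqrt 3"
proof -
  let ?M = "\<Sum>i\<in>{1,2,3}. kron (dot_pauli (u i)) (dot_pauli (v i))"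
  have "u i \<bullet> u i = 1" if "i \<in> {1,2,3}" for i
    using assms(1) that unfolding unit_triple_def by (metis norm_eq_1)
  then have "(\<Sum>i\<in>{1,2,3::nat}. \<Sum>j\<in>{1,2,3}. 2 * (u i \<bullet> u j) * (2 * (v i \<bullet> v j))) = 12"
    using assms(2) by (simp add: orthonormal_triple_def numeral_eq_Suc)
  moreover have "hs_inner ?M ?M =
      complex_of_real (\<Sum>i\<in>{1,2,3}. \<Sum>j\<in>{1,2,3}. 2 * (u i \<bullet> u j) * (2 * (v i \<bullet> v j)))"
    unfolding hs_inner_sum_left hs_inner_sum_right hs_inner_kron hs_inner_dot_pauli of_real_sum of_real_mult
    by (rule sum.swap)
  ultimately have "(norm ?M)\<^sup>2 = (2 * sqrt 3)\<^sup>2"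
    unfolding hs_inner_self of_real_eq_iff by (simp add: power_mult_distrib)
  then show ?thesis by (rule power2_eq_imp_eq) simp_all
qed

lemma cmod_correlation_sum_le:
  assumes "unit_triple u" "orthonormal_triple v"
  shows "cmod (correlation_sum \<rho> u v) \<le> 2 * sqrt 3 * norm (\<rho> - c *\<^sub>R mat 1)"
proof -
  let ?M = "\<Sum>i\<in>{1,2,3}. kron (dot_pauli (u i)) (dot_pauli (v i))"
  have "correlation_sum \<rho> u v = mtrace (\<rho> ** ?M)"
    unfolding correlation_sum_def matrix_mul_sum_right mtrace_sum ..
  moreover have "mtrace ?M = 0"
    unfolding mtrace_sum mtrace_kron mtrace_dot_pauli by simp
  ultimately show ?thesis
    using mtrace_mult_traceless_le[of ?M \<rho> c] norm_pauli_frame_sum[OF assms] by (simp add: mult.commute)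
qed

section \<open>Unitary diagonalisation of Hermitian matrices\<close>

definition givens :: "'n \<Rightarrow> 'n \<Rightarrow> complex \<Rightarrow> complex \<Rightarrow> complex^'n^'n" where
  "givens a b c s = (\<chi> p k.
     if p = a then (if k = a then c else if k = b then s else 0)
     else if p = b then (if k = a then - cnj s else if k = b then cnj c else 0)
     else (if k = p then 1 else 0))"

lemma sum_two_point_support:
  fixes x y :: complex
  assumes "a \<noteq> b"
  shows "(\<Sum>k\<in>(UNIV :: 'n::finite set). (if k = a then x else if k = b then y else 0) * F k) =
    x * F a + y * F b"
proof -
  have "(\<Sum>k\<in>UNIV. (if k = a then x else if k = b then y else 0) * F k)
     = (\<Sum>k\<in>UNIV. (if k = a then x * F a else 0) + (if k = b then y * F b else 0))"
    by (rule sum.cong) (use assms in auto)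
  then show ?thesis by (simp add: sum.distrib sum.delta')
qed

lemma givens_unitary:
  assumes ab: "a \<noteq> b" and cs: "c * cnj c + s * cnj s = 1"
  shows "unitary (givens a b c s :: complex^'n^'n)"
proof -
  let ?G = "givens a b c s :: complex^'n^'n"
  have row_a: "?G $ a $ k = (if k = a then c else if k = b then s else 0)" for k
    by (simp add: givens_def)
  have row_b: "?G $ b $ k = (if k = a then - cnj s else if k = b then cnj c else 0)" for k
    using ab by (simp add: givens_def)
  have row_other: "?G $ p $ k = (if k = p then 1 else 0)" if "p \<noteq> a" "p \<noteq> b" for p k
    using that by (simp add: givens_def)
  have delta: "(\<Sum>k\<in>UNIV. (if k = p then 1 else 0) * (F k :: complex)) = F p" for p :: 'n and F
    by (simp add: if_distrib if_distribR sum.delta' cong del: if_weak_cong)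
  have "(\<Sum>k\<in>UNIV. ?G $ p $ k * cnj (?G $ q $ k)) = (if p = q then 1 else 0)" for p q
    using ab cs
    by (cases "p = a"; cases "p = b"; cases "q = a"; cases "q = b")
      (simp_all only: row_a row_b row_other if_distrib[of cnj] complex_cnj_cnj complex_cnj_zero
        complex_cnj_one complex_cnj_minus sum_two_point_support[OF ab] delta simp_thms if_True if_False,
       simp_all add: algebra_simps)
  then show ?thesis
    by (simp add: unitary_iff_mult_adj vec_eq_iff mat_def matrix_matrix_mult_def)
qed

lemma diag_givens_conj:
  fixes \<rho> :: "complex^'n^'n"
  assumes ab: "a \<noteq> b"
  shows "(givens a b c s ** \<rho> ** adj (givens a b c s)) $ p $ p =
    (if p = a then c * cnj c * \<rho>$a$a + s * cnj s * \<rho>$b$b + c * cnj s * \<rho>$a$b + s * cnj c * \<rho>$b$a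
     else if p = b then s * cnj s * \<rho>$a$a + c * cnj c * \<rho>$b$b - c * cnj s * \<rho>$a$b - s * cnj c * \<rho>$b$a
     else \<rho>$p$p)"
proof -
  let ?G = "givens a b c s"
  have entry: "(?G ** \<rho> ** adj ?G) $ p $ p = (\<Sum>l\<in>UNIV. cnj (?G$p$l) * (\<Sum>k\<in>UNIV. ?G$p$k * \<rho>$k$l))"
    by (simp add: matrix_matrix_mult_def mult.commute)
  have cnj_if: "cnj (if P then x else if Q then y else 0) = (if P then cnj x else if Q then cnj y else 0)"
    for P Q x y by simp
  consider "p = a" | "p = b" | "p \<noteq> a" "p \<noteq> b" by blast
  then show ?thesis
  proof cases
    case 1
    then have row: "?G $ p $ k = (if k = a then c else if k = b then s else 0)" for k
      by (simp add: givens_def)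
    show ?thesis
      unfolding entry row cnj_if sum_two_point_support[OF ab] using 1 ab by (simp add: algebra_simps)
  next
    case 2
    then have row: "?G $ p $ k = (if k = a then - cnj s else if k = b then cnj c else 0)" for k
      using ab by (simp add: givens_def)
    show ?thesis
      unfolding entry row cnj_if sum_two_point_support[OF ab] using 2 ab by (simp add: algebra_simps)
  next
    case 3
    then have row: "?G $ p $ k = (if k = p then 1 else 0)" for k
      by (simp add: givens_def)
    show ?thesis
      unfolding entry row using 3 by (simp add: if_distrib if_distribR sum.delta' cong del: if_weak_cong)
  qed
qed

lemma weighted_diag_givens_conj:
  fixes \<rho> :: "complex^'n^'n" and d :: "'n \<Rightarrow> real"
  assumes herm: "hermitian \<rho>" and ab: "a \<noteq> b"
    and cs: "c * cnj c + s * cnj s = 1" and z: "c * cnj s * \<rho> $ a $ b = complex_of_real z"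
  shows "(\<Sum>p\<in>UNIV. d p * Re ((givens a b c s ** \<rho> ** adj (givens a b c s)) $ p $ p)) =
    (\<Sum>p\<in>UNIV. d p * Re (\<rho> $ p $ p)) + (d a - d b) * ((cmod s)\<^sup>2 * (Re (\<rho> $ b $ b) - Re (\<rho> $ a $ a)) + 2 * z)"
proof -
  let ?\<rho>' = "givens a b c s ** \<rho> ** adj (givens a b c s)"
  have z': "s * cnj c * \<rho> $ b $ a = complex_of_real z"
  proof -
    have "\<rho> $ b $ a = cnj (\<rho> $ a $ b)"
      using herm unfolding hermitian_def by (metis adj_nth)
    then show ?thesis using arg_cong[OF z, of cnj] by (simp add: ac_simps)
  qed
  have ss: "s * cnj s = complex_of_real ((cmod s)\<^sup>2)"
    by (rule complex_norm_square[symmetric])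
  have cc: "c * cnj c = 1 - s * cnj s"
    using cs by (simp add: eq_diff_eq)
  have ra: "Re (?\<rho>' $ a $ a) = (1 - (cmod s)\<^sup>2) * Re (\<rho> $ a $ a) + (cmod s)\<^sup>2 * Re (\<rho> $ b $ b) + 2 * z"
    unfolding diag_givens_conj[OF ab] cc ss z z' by simp
  have rb: "Re (?\<rho>' $ b $ b) = (cmod s)\<^sup>2 * Re (\<rho> $ a $ a) + (1 - (cmod s)\<^sup>2) * Re (\<rho> $ b $ b) - 2 * z"
    unfolding diag_givens_conj[OF ab] cc ss z z' using ab by simp
  have "(\<Sum>p\<in>UNIV. d p * (Re (?\<rho>' $ p $ p) - Re (\<rho> $ p $ p))) =
        (\<Sum>p\<in>{a,b}. d p * (Re (?\<rho>' $ p $ p) - Re (\<rho> $ p $ p)))"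
    by (rule sum.mono_neutral_right) (auto simp: diag_givens_conj[OF ab])
  also have "\<dots> = (d a - d b) * ((cmod s)\<^sup>2 * (Re (\<rho> $ b $ b) - Re (\<rho> $ a $ a)) + 2 * z)"
    using ab by (simp add: ra rb algebra_simps)
  finally show ?thesis
    by (simp add: sum_subtractf right_diff_distrib)
qed

lemma exists_unitary_increasing_weighted_diag:
  fixes \<rho> :: "complex^'n^'n" and d :: "'n \<Rightarrow> real"
  assumes herm: "hermitian \<rho>" and r: "\<rho> $ a $ b \<noteq> 0" and dab: "d a \<noteq> d b"
  obtains G where "unitary G"
    "(\<Sum>p\<in>UNIV. d p * Re (\<rho> $ p $ p)) < (\<Sum>p\<in>UNIV. d p * Re ((G ** \<rho> ** adj G) $ p $ p))"
proof -
  have ab: "a \<noteq> b" using dab by blast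
  define \<delta> where "\<delta> = d a - d b"
  define \<Delta> where "\<Delta> = Re (\<rho> $ b $ b) - Re (\<rho> $ a $ a)"
  define m where "m = (cmod (\<rho> $ a $ b))\<^sup>2"
  \<comment> \<open>The gain is \<delta> e m (e \<Delta> + 2) / n, and this e makes both factors positive.\<close>
  define e where "e = sgn \<delta> / (\<bar>\<Delta>\<bar> + 1)"
  define n where "n = 1 + e\<^sup>2 * m"
  define c where "c = complex_of_real (1 / sqrt n)"
  define s where "s = complex_of_real (e / sqrt n) * \<rho> $ a $ b"
  have m: "m > 0" using r by (simp add: m_def)
  have n: "n > 0" unfolding n_def using m by (simp add: add_pos_nonneg)
  have sn: "sqrt n * sqrt n = n" using n by simp
  have rr: "\<rho> $ a $ b * cnj (\<rho> $ a $ b) = complex_of_real m"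
    unfolding m_def by (rule complex_norm_square[symmetric])
  have s2: "(cmod s)\<^sup>2 = e\<^sup>2 * m / n"
    unfolding s_def m_def norm_mult norm_of_real using n by (simp add: power_mult_distrib power_divide)
  have cs: "c * cnj c + s * cnj s = 1"
  proof -
    have "c * cnj c = complex_of_real (1 / n)"
      using sn by (simp add: c_def flip: of_real_mult)
    moreover have "s * cnj s = complex_of_real (e\<^sup>2 * m / n)"
      by (simp add: complex_norm_square[symmetric] s2)
    ultimately have "c * cnj c + s * cnj s = complex_of_real (1 / n + e\<^sup>2 * m / n)"
      by simp
    moreover have "1 / n + e\<^sup>2 * m / n = 1"
      using n by (simp add: n_def field_simps)
    ultimately show ?thesis by simp
  qed
  have z: "c * cnj s * \<rho> $ a $ b = complex_of_real (e * m / n)"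
  proof -
    have "c * cnj s * \<rho> $ a $ b =
        complex_of_real (1 / sqrt n) * complex_of_real (e / sqrt n) * (\<rho> $ a $ b * cnj (\<rho> $ a $ b))"
      unfolding c_def s_def by (simp only: complex_cnj_mult complex_cnj_complex_of_real ac_simps)
    also have "\<dots> = complex_of_real (1 / sqrt n * (e / sqrt n) * m)"
      unfolding rr of_real_mult ..
    also have "1 / sqrt n * (e / sqrt n) * m = e * m / n"
      using sn n by (simp add: field_simps)
    finally show ?thesis .
  qed
  have "\<delta> * e > 0"
    using dab by (simp add: e_def \<delta>_def sgn_real_def divide_pos_pos add_pos_nonneg)
  moreover have "e * \<Delta> + 2 > 0"
  proof -
    have "\<bar>e * \<Delta>\<bar> \<le> \<bar>\<Delta>\<bar> / (\<bar>\<Delta>\<bar> + 1)"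
      by (simp add: e_def abs_mult abs_sgn_eq)
    also have "\<dots> < 1" by simp
    finally show ?thesis by linarith
  qed
  ultimately have "\<delta> * e * (m / n) * (e * \<Delta> + 2) > 0"
    using m n by simp
  then have gain: "\<delta> * (e\<^sup>2 * m / n * \<Delta> + 2 * (e * m / n)) > 0"
    by (simp add: power2_eq_square algebra_simps add_divide_distrib)
  show ?thesis
  proof
    show "unitary (givens a b c s)" by (rule givens_unitary[OF ab cs])
    show "(\<Sum>p\<in>UNIV. d p * Re (\<rho> $ p $ p)) <
      (\<Sum>p\<in>UNIV. d p * Re ((givens a b c s ** \<rho> ** adj (givens a b c s)) $ p $ p))"
      unfolding weighted_diag_givens_conj[OF herm ab cs z] s2 using gain
      by (simp add: \<delta>_def \<Delta>_def)
  qed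
qed

text \<open>For distinct weights d, a unitary maximising \<Sum>_p d p (U \<sigma> U*)_pp over the compact unitary
  group diagonalises \<sigma>: a nonzero off-diagonal entry would let a Givens rotation increase it.\<close>

lemma hermitian_unitarily_diagonalizable:
  fixes \<sigma> :: "complex^'n^'n"
  assumes herm: "hermitian \<sigma>"
  obtains U p where "unitary U" "U ** \<sigma> ** adj U = diag_mat p"
proof -
  obtain f :: "'n \<Rightarrow> nat" where "inj f" using ex_inj by blast
  define d where "d p = real (f p)" for p
  have d: "d a \<noteq> d b" if "a \<noteq> b" for a b
    using \<open>inj f\<close> that by (simp add: d_def inj_eq)
  define F where "F U = (\<Sum>p\<in>UNIV. d p * Re ((U ** \<sigma> ** adj U) $ p $ p))" for U :: "complex^'n^'n"
  have "continuous_on {U. unitary U} F"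
    unfolding F_def matrix_matrix_mult_def adj_def by (intro continuous_intros)
  then obtain U where U: "unitary U" and max: "\<And>V. unitary V \<Longrightarrow> F V \<le> F U"
    using continuous_attains_sup[OF compact_unitary] unitary_mat_1 by blast
  define \<rho> where "\<rho> = U ** \<sigma> ** adj U"
  have herm_\<rho>: "hermitian \<rho>"
    unfolding \<rho>_def by (rule hermitian_unitary_conj[OF herm])
  have off_diag: "\<rho> $ a $ b = 0" if ab: "a \<noteq> b" for a b
  proof (rule ccontr)
    assume "\<rho> $ a $ b \<noteq> 0"
    with herm_\<rho> obtain G where G: "unitary G"
      and "F U < (\<Sum>p\<in>UNIV. d p * Re ((G ** \<rho> ** adj G) $ p $ p))"
      unfolding F_def \<rho>_def using d[OF ab] by (rule exists_unitary_increasing_weighted_diag)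
    moreover have "G ** \<rho> ** adj G = (G ** U) ** \<sigma> ** adj (G ** U)"
      by (simp add: \<rho>_def adj_mult matrix_mul_assoc)
    ultimately have "F U < F (G ** U)"
      by (simp add: F_def)
    with max[OF unitary_mult[OF G U]] show False by simp
  qed
  have "\<rho> $ a $ a = complex_of_real (Re (\<rho> $ a $ a))" for a
  proof -
    have "cnj (\<rho> $ a $ a) = \<rho> $ a $ a"
      using herm_\<rho> unfolding hermitian_def by (metis adj_nth)
    then show ?thesis by (metis Reals_cnj_iff complex_is_Real_iff of_real_Re)
  qed
  then have "\<rho> = diag_mat (\<lambda>a. Re (\<rho> $ a $ a))"
    by (auto simp: diag_mat_def vec_eq_iff off_diag)
  with U show ?thesis unfolding \<rho>_def by (rule that)
qed

lemma density_matrix_unitarily_diagonal: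
  fixes \<sigma> :: "complex^'n^'n"
  assumes dm: "density_matrix \<sigma>"
  obtains U p where "unitary U" "U ** \<sigma> ** adj U = diag_mat p"
    "(\<Sum>j\<in>UNIV. p j) = 1" "Re (mtrace (\<sigma> ** \<sigma>)) = (\<Sum>j\<in>UNIV. (p j)\<^sup>2)"
proof -
  obtain U p where U: "unitary U" and diag: "U ** \<sigma> ** adj U = diag_mat p"
    using hermitian_unitarily_diagonalizable[OF hermitian_if_density_matrix[OF dm]] .
  have "complex_of_real (\<Sum>j\<in>UNIV. p j) = mtrace \<sigma>"
    using mtrace_unitary_conj[OF U, of \<sigma>] by (simp add: diag mtrace_def diag_mat_def)
  then have "(\<Sum>j\<in>UNIV. p j) = 1"
    using dm unfolding density_matrix_def by (metis of_real_eq_1_iff)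
  moreover have "Re (mtrace (\<sigma> ** \<sigma>)) = (norm (U ** \<sigma> ** adj U))\<^sup>2"
    using dm by (simp add: purity_eq_power2_norm hermitian_if_density_matrix norm_unitary_conj[OF U])
  moreover have "(norm (diag_mat p))\<^sup>2 = (\<Sum>j\<in>UNIV. (p j)\<^sup>2)"
    by (simp add: power2_norm_matrix diag_mat_def if_distrib if_distribR cong del: if_weak_cong)
  ultimately show ?thesis
    using U diag that by simp
qed

section \<open>Bell-diagonal states and balanced frames\<close>

text \<open>Column (x, y) is the Bell state (|0 y\<rangle> + (-1)^x |1 \<not>y\<rangle>) / \<surd>2.\<close>

definition bell_basis :: qqmat where
  "bell_basis = (\<chi> p j. if (fst p = snd p) = (snd j = 0)
      then (if fst j = 1 \<and> fst p = 1 then - 1 else 1) / complex_of_real (sqrt 2) else 0)"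

text \<open>The diagonal of the correlation matrix Tr (\<rho> (s_k \<otimes> s_k)) of the Bell-diagonal state with
  weights p (the off-diagonal correlations vanish).\<close>

definition bell_correlation :: "(2 \<times> 2 \<Rightarrow> real) \<Rightarrow> real^3" where
  "bell_correlation p = (\<chi> k.
     if k = 0 then p (0,0) + p (0,1) - p (1,0) - p (1,1)
     else if k = 1 then - p (0,0) + p (0,1) + p (1,0) - p (1,1)
     else p (0,0) - p (0,1) + p (1,0) - p (1,1))"

lemma unitary_bell_basis: "unitary bell_basis"
proof -
  have s2: "complex_of_real (sqrt 2) * complex_of_real (sqrt 2) = 2"
    by (simp flip: of_real_mult)
  have "(bell_basis ** adj bell_basis) $ p $ q = mat 1 $ p $ q" for p q
    using UNIV_2_cases[of "fst p"] UNIV_2_cases[of "snd p"] UNIV_2_cases[of "fst q"] UNIV_2_cases[of "snd q"]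
    by (cases p, cases q)
      (auto simp: matrix_matrix_mult_def sum_UNIV_2_times_2 bell_basis_def mat_def field_simps s2)
  then show ?thesis by (simp add: unitary_iff_mult_adj vec_eq_iff)
qed

lemma bell_basis_conj_pauli_diag:
  "(adj bell_basis ** kron (dot_pauli x) (dot_pauli y) ** bell_basis) $ j $ j =
    complex_of_real (x$0 * y$0 * (if fst j = 0 then 1 else -1)
      + x$1 * y$1 * (if fst j = snd j then -1 else 1)
      + x$2 * y$2 * (if snd j = 0 then 1 else -1))"
proof -
  have s2: "complex_of_real (sqrt 2) * complex_of_real (sqrt 2) = 2"
    by (simp flip: of_real_mult)
  show ?thesis
    using UNIV_2_cases[of "fst j"] UNIV_2_cases[of "snd j"]
    by (cases j) (auto simp: matrix_matrix_mult_def sum_UNIV_2_times_2 kron_def bell_basis_def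
        dot_pauli_nth complex_eq_iff field_simps s2)
qed

lemma mtrace_bell_diagonal_mult_kron:
  "mtrace (bell_basis ** diag_mat p ** adj bell_basis ** kron (dot_pauli x) (dot_pauli y)) =
    complex_of_real (\<Sum>k\<in>UNIV. x$k * y$k * bell_correlation p $ k)"
proof -
  let ?K = "kron (dot_pauli x) (dot_pauli y)"
  have "mtrace (bell_basis ** diag_mat p ** adj bell_basis ** ?K) =
      mtrace (diag_mat p ** (adj bell_basis ** ?K ** bell_basis))"
    by (metis matrix_mul_assoc mtrace_mult_commute)
  also have "\<dots> = complex_of_real (\<Sum>k\<in>UNIV. x$k * y$k * bell_correlation p $ k)"
    unfolding mtrace_diag_mat_mult bell_basis_conj_pauli_diag sum_UNIV_2_times_2 sum_UNIV_3
    by (simp add: bell_correlation_def algebra_simps flip: of_real_mult of_real_add)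
  finally show ?thesis .
qed

lemma correlation_sum_bell_diagonal:
  "correlation_sum (bell_basis ** diag_mat p ** adj bell_basis) u v =
    complex_of_real (\<Sum>i\<in>{1,2,3}. \<Sum>k\<in>UNIV. u i $ k * v i $ k * bell_correlation p $ k)"
  unfolding correlation_sum_def mtrace_bell_diagonal_mult_kron of_real_sum ..

lemma power2_norm_bell_correlation:
  "(norm (bell_correlation p))\<^sup>2 = 4 * (\<Sum>j\<in>UNIV. (p j)\<^sup>2) - (\<Sum>j\<in>UNIV. p j)\<^sup>2"
  unfolding power2_norm_eq_inner inner_vec_def bell_correlation_def sum_UNIV_3 sum_UNIV_2_times_2
  by (simp add: power2_eq_square algebra_simps)

lemma orthonormal_triple_balancing_abc:
  fixes w :: "3 \<Rightarrow> real" and a b c :: 3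
  assumes distinct: "a \<noteq> b" "a \<noteq> c" "b \<noteq> c" and univ: "UNIV = {a, b, c}"
    and m: "m = (w a + w b + w c) / 3" and wa: "m \<le> w a" and wb: "w b \<le> m"
  shows "\<exists>v. orthonormal_triple v \<and> (\<forall>i\<in>{1,2,3}. (\<Sum>k\<in>UNIV. (v i $ k)\<^sup>2 * w k) = m)"
proof -
  \<comment> \<open>v 1 lies in the (a, b)-plane and carries weight exactly m; v 2 and v 3 share the
    orthogonal direction y in that plane and split e c, so each gets half of the remaining 2 m.\<close>
  define \<theta> where "\<theta> = (if w a = w b then 1 else (m - w b) / (w a - w b))"
  have \<theta>: "0 \<le> \<theta>" "\<theta> \<le> 1" "\<theta> * w a + (1 - \<theta>) * w b = m"
    using wa wb by (auto simp: \<theta>_def divide_simps algebra_simps)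
  define co where "co = sqrt \<theta>"
  define si where "si = sqrt (1 - \<theta>)"
  define r where "r = 1 / sqrt 2"
  have co2: "co * co = \<theta>" and si2: "si * si = 1 - \<theta>" and r2: "r * r = 1 / 2"
    using \<theta> by (simp_all add: co_def si_def r_def)
  define e :: "3 \<Rightarrow> real^3" where "e x = axis x 1" for x
  define v1 where "v1 = co *\<^sub>R e a + si *\<^sub>R e b"
  define y where "y = (- si) *\<^sub>R e a + co *\<^sub>R e b"
  define v :: "nat \<Rightarrow> real^3" where
    "v i = (if i = 1 then v1 else r *\<^sub>R (y + (if i = 2 then 1 else - 1) *\<^sub>R e c))" for i
  have e: "e x \<bullet> e y = (if x = y then 1 else 0)" for x y
    by (simp add: e_def inner_axis_axis)
  have "v1 \<bullet> v1 = 1" "y \<bullet> y = 1"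
    using distinct co2 si2 by (simp_all add: v1_def y_def inner_add_left inner_add_right e inner_commute)
      (simp add: inner_diff_left inner_diff_right e inner_commute)
  moreover have "v1 \<bullet> y = 0" "v1 \<bullet> e c = 0" "y \<bullet> e c = 0" "e c \<bullet> e c = 1"
    using distinct by (simp_all add: v1_def y_def inner_add_left inner_add_right e algebra_simps)
  ultimately have "orthonormal_triple v"
    using r2 unfolding orthonormal_triple_def v_def
    by (auto simp: inner_add_left inner_add_right inner_diff_left inner_diff_right inner_commute)
  moreover have "(\<Sum>k\<in>UNIV. (v i $ k)\<^sup>2 * w k) = m" if "i \<in> {1,2,3}" for i
  proof -
    have sum_abc: "(\<Sum>k\<in>UNIV. f k) = f a + f b + f c" for f :: "3 \<Rightarrow> real"
      unfolding univ using distinct by simp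
    have "(\<Sum>k\<in>UNIV. (v i $ k)\<^sup>2 * w k) =
        (if i = 1 then co\<^sup>2 * w a + si\<^sup>2 * w b else r\<^sup>2 * (si\<^sup>2 * w a + co\<^sup>2 * w b + w c))"
      using distinct unfolding sum_abc v_def
      by (auto simp: v1_def y_def e_def axis_def power_mult_distrib algebra_simps)
    also have "\<dots> = m"
      unfolding power2_eq_square co2 si2 r2 using \<theta>(3) m by (auto simp: algebra_simps)
    finally show ?thesis .
  qed
  ultimately show ?thesis by blast
qed

lemma exists_orthonormal_triple_balancing:
  fixes w :: "3 \<Rightarrow> real"
  shows "\<exists>v. orthonormal_triple v \<and>
    (\<forall>i\<in>{1,2,3}. (\<Sum>k\<in>UNIV. (v i $ k)\<^sup>2 * w k) = (\<Sum>k\<in>UNIV. w k) / 3)"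
proof -
  have "Max (range w) \<in> range w" by (rule Max_in) auto
  then obtain a where a: "w a = Max (range w)" by (metis rangeE)
  obtain b c where distinct: "a \<noteq> b" "a \<noteq> c" "b \<noteq> c" and univ: "UNIV = {a, b, c}"
    by (rule obtain_other_two_of_3)
  define m where "m = (w a + w b + w c) / 3"
  have "w b \<le> w a" "w c \<le> w a" unfolding a by simp_all
  then have wa: "m \<le> w a" by (simp add: m_def)
  have "(\<Sum>k\<in>UNIV. w k) / 3 = m"
    unfolding univ m_def using distinct by simp
  moreover have "\<exists>v. orthonormal_triple v \<and> (\<forall>i\<in>{1,2,3}. (\<Sum>k\<in>UNIV. (v i $ k)\<^sup>2 * w k) = m)"
  proof (cases "w b \<le> m")
    case True
    with distinct univ m_def wa show ?thesis
      by (rule orthonormal_triple_balancing_abc)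
  next
    case False
    then have "w c \<le> m" using wa by (simp add: m_def)
    moreover have "a \<noteq> c" "a \<noteq> b" "c \<noteq> b" "UNIV = {a, c, b}" "m = (w a + w c + w b) / 3"
      using distinct univ by (auto simp: m_def)
    ultimately show ?thesis
      using wa by (intro orthonormal_triple_balancing_abc[of a c b]) simp_all
  qed
  ultimately show ?thesis by simp
qed

lemma exists_frame_attaining_sqrt3_norm:
  fixes t :: "real^3"
  assumes "t \<noteq> 0"
  shows "\<exists>u v. unit_triple u \<and> orthonormal_triple v \<and>
    (\<Sum>i\<in>{1,2,3}. \<Sum>k\<in>UNIV. u i $ k * v i $ k * t $ k) = sqrt 3 * norm t"
proof -
  define m where "m = (norm t)\<^sup>2 / 3"
  have m: "m > 0" using assms by (simp add: m_def)
  have "(\<Sum>k\<in>UNIV. (t $ k)\<^sup>2) / 3 = m"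
    by (simp add: m_def norm_vec_def L2_set_def sum_nonneg)
  then obtain v where v: "orthonormal_triple v"
    and bal: "\<And>i. i \<in> {1,2,3} \<Longrightarrow> (\<Sum>k\<in>UNIV. (v i $ k)\<^sup>2 * (t $ k)\<^sup>2) = m"
    using exists_orthonormal_triple_balancing[of "\<lambda>k. (t $ k)\<^sup>2"] by (auto simp del: UNIV_3)
  define u :: "nat \<Rightarrow> real^3" where "u i = (\<chi> k. v i $ k * t $ k / sqrt m)" for i
  have u: "(\<Sum>k\<in>UNIV. u i $ k * v i $ k * t $ k) = sqrt m" and "norm (u i) = 1"
    if "i \<in> {1,2,3}" for i
  proof -
    have "(\<Sum>k\<in>UNIV. u i $ k * v i $ k * t $ k) = (\<Sum>k\<in>UNIV. (v i $ k)\<^sup>2 * (t $ k)\<^sup>2) / sqrt m"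
      by (simp add: u_def sum_divide_distrib power2_eq_square ac_simps)
    then show "(\<Sum>k\<in>UNIV. u i $ k * v i $ k * t $ k) = sqrt m"
      using bal[OF that] m by (simp add: real_div_sqrt)
    have "(norm (u i))\<^sup>2 = (\<Sum>k\<in>UNIV. (v i $ k)\<^sup>2 * (t $ k)\<^sup>2) / m"
      using m by (simp add: u_def norm_vec_def L2_set_def sum_nonneg sum_divide_distrib power_mult_distrib power_divide)
    then have "(norm (u i))\<^sup>2 = 1"
      using bal[OF that] m by simp
    then show "norm (u i) = 1"
      using real_sqrt_unique[of "norm (u i)" 1] by simp
  qed
  then have "unit_triple u" by (simp add: unit_triple_def)
  moreover have "(\<Sum>i\<in>{1,2,3}. \<Sum>k\<in>UNIV. u i $ k * v i $ k * t $ k) = 3 * sqrt m"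
    using u by simp
  moreover have "3 * sqrt m = sqrt 3 * norm t"
    by (simp add: m_def real_sqrt_divide field_simps)
  ultimately show ?thesis using v by (intro exI[of _ u] exI[of _ v]) simp
qed

lemma power2_norm_minus_maximally_mixed:
  fixes \<sigma> :: qqmat
  assumes "density_matrix \<sigma>"
  shows "(norm (\<sigma> - (1 / 4) *\<^sub>R mat 1))\<^sup>2 = Re (mtrace (\<sigma> ** \<sigma>)) - 1 / 4"
  using assms by (simp add: power2_norm_minus_scaleR_mat_1 purity_eq_power2_norm
      hermitian_if_density_matrix density_matrix_def power_divide)

lemma mem_AUS3_if_purity_le:
  fixes \<sigma> :: qqmat
  assumes dm: "density_matrix \<sigma>" and purity: "Re (mtrace (\<sigma> ** \<sigma>)) \<le> 1 / 2"
  shows "\<sigma> \<in> AUS3"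
  unfolding mem_AUS3_iff
proof (intro conjI allI impI dm)
  fix U :: qqmat and u v
  assume U: "unitary U" and "unit_triple u" "orthonormal_triple v"
  have "(norm (\<sigma> - (1 / 4) *\<^sub>R mat 1))\<^sup>2 \<le> (1 / 2)\<^sup>2"
    using purity by (simp add: power2_norm_minus_maximally_mixed[OF dm] power_divide)
  then have "norm (\<sigma> - (1 / 4) *\<^sub>R mat 1) \<le> 1 / 2"
    by (rule power2_le_imp_le) simp
  moreover have "U ** \<sigma> ** adj U - (1 / 4) *\<^sub>R mat 1 = U ** (\<sigma> - (1 / 4) *\<^sub>R mat 1) ** adj U"
    by (simp add: matrix_mul_diff_left matrix_mul_diff_right unitary_conj_scaleR_mat_1[OF U])
  ultimately have "norm (U ** \<sigma> ** adj U - (1 / 4) *\<^sub>R mat 1) \<le> 1 / 2"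
    by (simp add: norm_unitary_conj[OF U])
  have "cmod (correlation_sum (U ** \<sigma> ** adj U) u v) \<le> 2 * sqrt 3 * norm (U ** \<sigma> ** adj U - (1 / 4) *\<^sub>R mat 1)"
    by (rule cmod_correlation_sum_le[OF \<open>unit_triple u\<close> \<open>orthonormal_triple v\<close>])
  also have "\<dots> \<le> 2 * sqrt 3 * (1 / 2)"
    using \<open>norm (U ** \<sigma> ** adj U - (1 / 4) *\<^sub>R mat 1) \<le> 1 / 2\<close> by (intro mult_left_mono) simp_all
  finally show "cmod (correlation_sum (U ** \<sigma> ** adj U) u v) \<le> sqrt 3"
    by simp
qed

lemma purity_le_if_mem_AUS3:
  fixes \<sigma> :: qqmat
  assumes "\<sigma> \<in> AUS3"
  shows "Re (mtrace (\<sigma> ** \<sigma>)) \<le> 1 / 2"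
proof -
  have "density_matrix \<sigma>" using assms by (simp add: mem_AUS3_iff)
  then obtain U p where U: "unitary U" and diag: "U ** \<sigma> ** adj U = diag_mat p"
    and "(\<Sum>j\<in>UNIV. p j) = 1" "Re (mtrace (\<sigma> ** \<sigma>)) = (\<Sum>j\<in>UNIV. (p j)\<^sup>2)"
    by (rule density_matrix_unitarily_diagonal)
  then have norm_t: "(norm (bell_correlation p))\<^sup>2 = 4 * Re (mtrace (\<sigma> ** \<sigma>)) - 1"
    by (simp add: power2_norm_bell_correlation)
  have "norm (bell_correlation p) \<le> 1"
  proof (cases "bell_correlation p = 0")
    case False
    then obtain u v where "unit_triple u" "orthonormal_triple v"
      and attained: "(\<Sum>i\<in>{1,2,3}. \<Sum>k\<in>UNIV. u i $ k * v i $ k * bell_correlation p $ k) =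
        sqrt 3 * norm (bell_correlation p)"
      using exists_frame_attaining_sqrt3_norm by blast
    define V where "V = bell_basis ** U"
    have V: "unitary V" unfolding V_def by (rule unitary_mult[OF unitary_bell_basis U])
    have conj: "V ** \<sigma> ** adj V = bell_basis ** diag_mat p ** adj bell_basis"
      by (simp add: V_def adj_mult matrix_mul_assoc flip: diag)
    have "cmod (correlation_sum (V ** \<sigma> ** adj V) u v) = sqrt 3 * norm (bell_correlation p)"
      unfolding conj correlation_sum_bell_diagonal attained norm_of_real by simp
    moreover have "cmod (correlation_sum (V ** \<sigma> ** adj V) u v) \<le> sqrt 3"
      using assms V \<open>unit_triple u\<close> \<open>orthonormal_triple v\<close> by (simp add: mem_AUS3_iff)
    ultimately show ?thesis by simp
  qed simp
  then have "(norm (bell_correlation p))\<^sup>2 \<le> 1"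
    by (simp add: power_le_one)
  then show ?thesis using norm_t by linarith
qed

lemma mem_AUS3_iff_purity_le:
  fixes \<sigma> :: qqmat
  assumes "density_matrix \<sigma>"
  shows "\<sigma> \<in> AUS3 \<longleftrightarrow> Re (mtrace (\<sigma> ** \<sigma>)) \<le> 1 / 2"
  using purity_le_if_mem_AUS3 mem_AUS3_if_purity_le[OF assms] by (rule iffI)

theorem corollary1:
  fixes \<sigma> :: qqmat
  assumes "density_matrix \<sigma>"
  shows "(\<sigma> \<in> AUS3 \<longleftrightarrow> Re (mtrace (\<sigma> ** \<sigma>)) \<le> 1 / 2)
       \<and> (\<sigma> \<in> AUS3 \<longleftrightarrow> frob_norm (\<sigma> - (1 / 4) *\<^sub>R mat 1) \<le> 1 / 2)"
proof -
  have "frob_norm (\<sigma> - (1 / 4) *\<^sub>R mat 1) \<le> 1 / 2 \<longleftrightarrow> (norm (\<sigma> - (1 / 4) *\<^sub>R mat 1))\<^sup>2 \<le> (1 / 2)\<^sup>2"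
    by (simp add: power2_le_iff_abs_le flip: norm_eq_frob_norm)
  also have "\<dots> \<longleftrightarrow> Re (mtrace (\<sigma> ** \<sigma>)) \<le> 1 / 2"
    by (auto simp: power2_norm_minus_maximally_mixed[OF assms] power_divide)
  finally show ?thesis
    using mem_AUS3_iff_purity_le[OF assms] by simp
qed

end
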